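(* Let $H$ be a countable group and $E$ a normal subgroup of $H$. Let $H\curvearrowright X$ be a Borel action on a standard Borel space such that $E$ acts on $X$ trivially. Set $\mathcal{H}=X\rtimes H$ and $\mathcal{R}=\mathcal{R}(H/E\curvearrowright X)$, and let $q\colon\mathcal{H}\to\mathcal{R}$ be the quotient map $(x,h)\mapsto(x,h^{-1}x)$. Suppose that $\mathcal{R}$ is hyperfinite. Then the exact sequence of groupoids \[1\to X\times E\to\mathcal{H}\xrightarrow{q}\mathcal{R}\to1\] splits, i.e. there exists a Borel homomorphism $\sigma\colon\mathcal{R}\to\mathcal{H}$ which is a section of $q$.
   Context: $X\rtimes H$ is the groupoid on $X\times H$ with unit space $X$, range $(x,h)\mapsto x$, source $(x,h)\mapsto h^{-1}x$, product $(x,h)(h^{-1}x,k)=(x,hk)$. $\mathcal{R}(H/E\curvearrowright X)=\{(x,h^{-1}x):x\in X,h\in H\}$ is the orbit equivalence relation, a groupoid with $r(x,y)=x$, $s(x,y)=y$, $(x,y)(y,z)=(x,z)$. A countable Borel equivalence relation is hyperfinite if it is an increasing union of Borel equivalence relations with finite classes. *)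

theory Defs
  imports "HOL-Analysis.Analysis" "HOL-Algebra.Group_Action" "HOL-Algebra.Coset"
begin

text \<open>Transformation groupoid X \<rtimes> H on X \<times> H (with X = UNIV of a Polish type).
  range (x,h) = x, source (x,h) = h^-1 x, product (x,h)(h^-1 x,k) = (x, h k).\<close>

definition ag_range :: "('x \<times> 'g) \<Rightarrow> 'x" where
  "ag_range g = fst g"

definition ag_source :: "('g, 'm) monoid_scheme \<Rightarrow> ('g \<Rightarrow> 'x \<Rightarrow> 'x) \<Rightarrow> ('x \<times> 'g) \<Rightarrow> 'x" where
  "ag_source H act g = act (inv\<^bsub>H\<^esub> (snd g)) (fst g)"

definition ag_mult :: "('g, 'm) monoid_scheme \<Rightarrow> ('x \<times> 'g) \<Rightarrow> ('x \<times> 'g) \<Rightarrow> ('x \<times> 'g)" where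
  "ag_mult H g k = (fst g, snd g \<otimes>\<^bsub>H\<^esub> snd k)"

definition action_groupoid :: "('g, 'm) monoid_scheme \<Rightarrow> ('x \<times> 'g) set" where
  "action_groupoid H = UNIV \<times> carrier H"

text \<open>Orbit equivalence relation R(H/E acting on X) = {(x, h^-1 x)}; groupoid with
  r(x,y)=x, s(x,y)=y, (x,y)(y,z)=(x,z).\<close>

definition orbit_rel :: "('g, 'm) monoid_scheme \<Rightarrow> ('g \<Rightarrow> 'x \<Rightarrow> 'x) \<Rightarrow> ('x \<times> 'x) set" where
  "orbit_rel H act = {(x, act (inv\<^bsub>H\<^esub> h) x) | x h. h \<in> carrier H}"

definition quot_map :: "('g, 'm) monoid_scheme \<Rightarrow> ('g \<Rightarrow> 'x \<Rightarrow> 'x) \<Rightarrow> ('x \<times> 'g) \<Rightarrow> ('x \<times> 'x)" where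
  "quot_map H act g = (fst g, act (inv\<^bsub>H\<^esub> (snd g)) (fst g))"

definition groupoid_hom_rel_ag ::
  "('g, 'm) monoid_scheme \<Rightarrow> ('g \<Rightarrow> 'x \<Rightarrow> 'x) \<Rightarrow> ('x \<times> 'x) set \<Rightarrow> (('x \<times> 'x) \<Rightarrow> ('x \<times> 'g)) \<Rightarrow> bool" where
  "groupoid_hom_rel_ag H act R \<sigma> \<longleftrightarrow>
     (\<forall>p \<in> R. \<sigma> p \<in> action_groupoid H) \<and>
     (\<forall>x y z. (x, y) \<in> R \<longrightarrow> (y, z) \<in> R \<longrightarrow>
        ag_source H act (\<sigma> (x, y)) = ag_range (\<sigma> (y, z)) \<and>
        \<sigma> (x, z) = ag_mult H (\<sigma> (x, y)) (\<sigma> (y, z)))"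

definition hyperfinite :: "('x::topological_space \<times> 'x) set \<Rightarrow> bool" where
  "hyperfinite R \<longleftrightarrow>
     (\<exists>F :: nat \<Rightarrow> ('x \<times> 'x) set.
        incseq F \<and> (\<Union>n. F n) = R \<and>
        (\<forall>n. F n \<in> sets (borel \<Otimes>\<^sub>M borel) \<and> equiv UNIV (F n) \<and>
             (\<forall>x. finite (F n `` {x}))))"

end

theory Submission
  imports Defs "HOL-Library.Fun_Lexorder"
begin

(* Write the orbit relation as the increasing union of the finite Borel equivalence relations F n.
   Fix a countable separating family of open sets B i; choosing in every F n-class its least point
   for the lexicographic order of the codes (x \<in> B i)_i gives Borel selectors, Borel because each
   class lies in an orbit of the countable group H.  Let T 0 = id and T (n+1) be the selector of F n
   (rep), pick Borel group elements w n with w n (T (n+1) x) = T n x (step_elem) and let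
   a n = w 0 ... w (n-1) (rep_elem), so that a n x (T n x) = x.  As w n x depends only on T n x and
   T (n+1) x, the element a n x (a n y)^-1 (level_cocycle) does not depend on n > m once
   (x, y) \<in> F m.  The limit c (cocycle) is a Borel cocycle with c (x, y) y = x, and
   (x, y) \<mapsto> (x, c (x, y)) is the required section. *)

subsection \<open>Lexicographically least points of finite sets\<close>

lemma less_fun_linear:
  fixes f g :: "nat \<Rightarrow> 'b::linorder"
  assumes "f \<noteq> g"
  shows "less_fun f g \<or> less_fun g f"
proof -
  define k where "k = (LEAST k. f k \<noteq> g k)"
  have "\<exists>k. f k \<noteq> g k"
    using assms by (auto simp: fun_eq_iff)
  then have "f k \<noteq> g k"
    unfolding k_def by (rule LeastI_ex)
  moreover have "\<forall>k'<k. f k' = g k'"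
    unfolding k_def using not_less_Least by blast
  ultimately show ?thesis
    unfolding less_fun_def by (auto simp: neq_iff)
qed

lemma finite_less_fun_minimal_unique:
  fixes \<kappa> :: "'a \<Rightarrow> nat \<Rightarrow> 'b::linorder"
  assumes "finite S" "S \<noteq> {}" "inj_on \<kappa> S"
  shows "\<exists>!m. m \<in> S \<and> (\<forall>y\<in>S. \<not> less_fun (\<kappa> y) (\<kappa> m))"
proof -
  have "\<exists>m\<in>S. \<forall>y\<in>S. \<not> less_fun (\<kappa> y) (\<kappa> m)"
    using assms(1,2)
  proof (induction S rule: finite_ne_induct)
    case (singleton x)
    then show ?case
      by (simp add: less_fun_irrefl)
  next
    case (insert x S)
    then obtain m where m: "m \<in> S" "\<forall>y\<in>S. \<not> less_fun (\<kappa> y) (\<kappa> m)"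
      by blast
    show ?case
    proof (cases "less_fun (\<kappa> x) (\<kappa> m)")
      case True
      then have "\<forall>y\<in>S. \<not> less_fun (\<kappa> y) (\<kappa> x)"
        using m(2) less_fun_trans by blast
      then show ?thesis
        by (simp add: less_fun_irrefl)
    next
      case False
      then show ?thesis
        using m by blast
    qed
  qed
  then obtain m where m: "m \<in> S" "\<forall>y\<in>S. \<not> less_fun (\<kappa> y) (\<kappa> m)"
    by blast
  show ?thesis
  proof (rule ex1I[of _ m])
    fix m' assume m': "m' \<in> S \<and> (\<forall>y\<in>S. \<not> less_fun (\<kappa> y) (\<kappa> m'))"
    show "m' = m"
    proof (rule ccontr)
      assume "m' \<noteq> m"
      then have "\<kappa> m' \<noteq> \<kappa> m"
        using inj_onD[OF assms(3)] m(1) m' by blast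
      then show False
        using less_fun_linear m m' by blast
    qed
  qed (use m in blast)
qed

definition less_fun_least :: "('a \<Rightarrow> nat \<Rightarrow> 'b::linorder) \<Rightarrow> 'a set \<Rightarrow> 'a" where
  "less_fun_least \<kappa> S = (THE m. m \<in> S \<and> (\<forall>y\<in>S. \<not> less_fun (\<kappa> y) (\<kappa> m)))"

lemma less_fun_least_eq_iff:
  assumes "finite S" "S \<noteq> {}" "inj_on \<kappa> S"
  shows "less_fun_least \<kappa> S = m \<longleftrightarrow> m \<in> S \<and> (\<forall>y\<in>S. \<not> less_fun (\<kappa> y) (\<kappa> m))"
proof
  note unique = finite_less_fun_minimal_unique[OF assms]
  show "less_fun_least \<kappa> S = m" if "m \<in> S \<and> (\<forall>y\<in>S. \<not> less_fun (\<kappa> y) (\<kappa> m))"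
    unfolding less_fun_least_def using unique that by (rule the1_equality)
  assume "less_fun_least \<kappa> S = m"
  moreover have "less_fun_least \<kappa> S \<in> S \<and> (\<forall>y\<in>S. \<not> less_fun (\<kappa> y) (\<kappa> (less_fun_least \<kappa> S)))"
    unfolding less_fun_least_def using unique by (rule theI')
  ultimately show "m \<in> S \<and> (\<forall>y\<in>S. \<not> less_fun (\<kappa> y) (\<kappa> m))"
    by (rule subst)
qed

lemma pred_less_fun_membership:
  fixes B :: "nat \<Rightarrow> 'a::topological_space set"
  assumes "\<And>i. B i \<in> sets borel"
    and [measurable]: "f \<in> borel_measurable M" "g \<in> borel_measurable M"
  shows "Measurable.pred M (\<lambda>x. less_fun (\<lambda>i. f x \<in> B i) (\<lambda>i. g x \<in> B i))"
proof -
  have [measurable]: "Measurable.pred M (\<lambda>x. f x \<in> B i)" "Measurable.pred M (\<lambda>x. g x \<in> B i)" for i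
    by (rule pred_sets2[OF assms(1)], fact)+
  show ?thesis
    unfolding less_fun_def less_bool_def by measurable
qed

subsection \<open>Countable Borel group actions\<close>

lemma countable_separating_open_sets:
  obtains B :: "nat \<Rightarrow> 'a::{second_countable_topology,t1_space} set"
  where "\<And>i. open (B i)" "inj (\<lambda>x i. x \<in> B i)"
proof -
  obtain \<B> :: "'a set set" where "countable \<B>" and basis: "topological_basis \<B>"
    using ex_countable_basis by blast
  have "\<B> \<noteq> {}"
    using topological_basisE[OF basis open_UNIV UNIV_I] by blast
  define B where "B = from_nat_into \<B>"
  have "open (B i)" for i
    unfolding B_def using from_nat_into[OF \<open>\<B> \<noteq> {}\<close>] basis
    by (simp add: topological_basis_open)
  moreover have "inj (\<lambda>x i. x \<in> B i)"
  proof (rule injI, rule ccontr)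
    fix x y assume codes: "(\<lambda>i. x \<in> B i) = (\<lambda>i. y \<in> B i)" and "x \<noteq> y"
    then obtain U where U: "open U" "x \<in> U" "y \<notin> U"
      using separation_t1 by blast
    obtain b where b: "b \<in> \<B>" "x \<in> b" "b \<subseteq> U"
      by (rule topological_basisE[OF basis U(1,2)])
    then obtain i where "B i = b"
      unfolding B_def using from_nat_into_surj[OF \<open>countable \<B>\<close>] by blast
    moreover have "x \<in> B i \<longleftrightarrow> y \<in> B i"
      using fun_cong[OF codes, of i] by simp
    ultimately show False
      using b U(3) by blast
  qed
  ultimately show thesis
    using that by blast
qed

lemma measurable_count_space_combine:
  assumes "countable I" "countable J"
    and "f \<in> M \<rightarrow>\<^sub>M count_space I" "g \<in> M \<rightarrow>\<^sub>M count_space J"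
    and "\<And>i j. i \<in> I \<Longrightarrow> j \<in> J \<Longrightarrow> h i j \<in> K"
  shows "(\<lambda>x. h (f x) (g x)) \<in> M \<rightarrow>\<^sub>M count_space K"
proof (rule measurable_compose_countable'[where f = "\<lambda>i x. h i (g x)", OF _ assms(3,1)])
  fix i assume "i \<in> I"
  show "(\<lambda>x. h i (g x)) \<in> M \<rightarrow>\<^sub>M count_space K"
    by (rule measurable_compose_countable'[where f = "\<lambda>j x. h i j", OF _ assms(4,2)])
      (simp add: \<open>i \<in> I\<close> assms(5))
qed

lemma (in group) mult_inv_mult_cancel_right:
  assumes "g \<in> carrier G" "h \<in> carrier G" "w \<in> carrier G"
  shows "g \<otimes> w \<otimes> inv (h \<otimes> w) = g \<otimes> inv h"
proof -
  have "g \<otimes> w \<otimes> inv (h \<otimes> w) = g \<otimes> (w \<otimes> (inv w \<otimes> inv h))"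
    using assms by (simp add: inv_mult_group m_assoc)
  also have "\<dots> = g \<otimes> inv h"
    using assms by (simp add: m_assoc[symmetric])
  finally show ?thesis .
qed

definition class_selector :: "('a \<times> 'a) set \<Rightarrow> ('a \<Rightarrow> 'a) \<Rightarrow> bool" where
  "class_selector F s \<longleftrightarrow> (\<forall>x. (x, s x) \<in> F) \<and> (\<forall>x y. (x, y) \<in> F \<longrightarrow> s x = s y)"

locale countable_Borel_action =
  fixes H (structure) and act :: "'g \<Rightarrow> 'x::{second_countable_topology,t2_space} \<Rightarrow> 'x"
  assumes countable_carrier: "countable (carrier H)"
    and action: "group_action H UNIV act"
    and act_measurable: "h \<in> carrier H \<Longrightarrow> act h \<in> borel_measurable borel"
begin

sublocale group H
  by (rule group_hom.axioms(1)[OF group_action.group_hom[OF action]])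

definition enum :: "nat \<Rightarrow> 'g" where
  "enum = from_nat_into (carrier H)"

lemma enum_closed[simp]: "enum i \<in> carrier H"
  unfolding enum_def by (rule from_nat_into) (use one_closed in blast)

lemma enum_surj: "h \<in> carrier H \<Longrightarrow> \<exists>i. enum i = h"
  unfolding enum_def by (rule from_nat_into_surj[OF countable_carrier])

lemma measurable_act_enum[measurable]: "act (enum i) \<in> borel_measurable borel"
  by (rule act_measurable[OF enum_closed])

lemma act_mult: "g \<in> carrier H \<Longrightarrow> h \<in> carrier H \<Longrightarrow> act (g \<otimes> h) x = act g (act h x)"
  by (rule group_action.composition_rule[OF action UNIV_I])

lemma act_one[simp]: "act \<one> x = x"
  using fun_cong[OF group_action.id_eq_one[OF action], of x] by simp

lemma act_inv_eq: "h \<in> carrier H \<Longrightarrow> act h y = x \<Longrightarrow> act (inv h) x = y"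
  using group_action.orbit_sym_aux[OF action] by blast

lemma act_inv_act[simp]: "h \<in> carrier H \<Longrightarrow> act h (act (inv h) x) = x"
  using act_mult[of h "inv h" x] by simp

lemma orbit_rel_iff: "(x, y) \<in> orbit_rel H act \<longleftrightarrow> (\<exists>h\<in>carrier H. act h y = x)"
proof
  assume "(x, y) \<in> orbit_rel H act"
  then obtain h where "h \<in> carrier H" "y = act (inv h) x"
    unfolding orbit_rel_def by blast
  then show "\<exists>h\<in>carrier H. act h y = x"
    using act_inv_act by blast
next
  assume "\<exists>h\<in>carrier H. act h y = x"
  then obtain h where h: "h \<in> carrier H" "act h y = x"
    by blast
  then have "y = act (inv h) x"
    using act_inv_eq[OF h] by simp
  then show "(x, y) \<in> orbit_rel H act"
    unfolding orbit_rel_def using h(1) by blast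
qed

lemma equiv_orbit_rel: "equiv UNIV (orbit_rel H act)"
proof (rule equivI)
  show "orbit_rel H act \<subseteq> UNIV \<times> UNIV"
    by simp
  show "refl (orbit_rel H act)"
  proof (rule reflI)
    show "(x, x) \<in> orbit_rel H act" for x
      unfolding orbit_rel_iff using act_one one_closed by blast
  qed
  show "sym (orbit_rel H act)"
  proof (rule symI)
    fix x y assume "(x, y) \<in> orbit_rel H act"
    then obtain h where "h \<in> carrier H" "act h y = x"
      unfolding orbit_rel_iff by blast
    then show "(y, x) \<in> orbit_rel H act"
      unfolding orbit_rel_iff using act_inv_eq inv_closed by blast
  qed
  show "trans (orbit_rel H act)"
  proof (rule transI)
    fix x y z assume "(x, y) \<in> orbit_rel H act" "(y, z) \<in> orbit_rel H act"
    then obtain g h where "g \<in> carrier H" "act g y = x" "h \<in> carrier H" "act h z = y"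
      unfolding orbit_rel_iff by blast
    then show "(x, z) \<in> orbit_rel H act"
      unfolding orbit_rel_iff using act_mult[of g h z] m_closed by blast
  qed
qed

lemma orbit_rel_enum:
  assumes "(x, y) \<in> orbit_rel H act"
  obtains i where "y = act (enum i) x"
proof -
  obtain h where h: "h \<in> carrier H" "act h y = x"
    using assms orbit_rel_iff by blast
  obtain i where "enum i = inv h"
    using enum_surj h(1) inv_closed by blast
  then have "y = act (enum i) x"
    using act_inv_eq[OF h] by simp
  then show thesis
    by (rule that)
qed

definition orbit_witness :: "'x \<Rightarrow> 'x \<Rightarrow> 'g" where
  "orbit_witness u v = enum (LEAST i. act (enum i) v = u)"

lemma orbit_witness:
  assumes "(u, v) \<in> orbit_rel H act"
  shows "orbit_witness u v \<in> carrier H" "act (orbit_witness u v) v = u"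
proof -
  have "(v, u) \<in> orbit_rel H act"
    using assms equiv_orbit_rel unfolding equiv_def sym_def by blast
  then obtain i where "u = act (enum i) v"
    by (rule orbit_rel_enum)
  then have "act (enum i) v = u"
    by simp
  then show "act (orbit_witness u v) v = u"
    unfolding orbit_witness_def by (rule LeastI)
qed (simp add: orbit_witness_def)

lemma measurable_orbit_witness[measurable]:
  assumes [measurable]: "f \<in> borel_measurable M" "g \<in> borel_measurable M"
  shows "(\<lambda>x. orbit_witness (f x) (g x)) \<in> M \<rightarrow>\<^sub>M count_space (carrier H)"
proof -
  have "Measurable.pred M (\<lambda>x. act (enum i) (g x) = f x)" for i
    unfolding pred_def by (rule measurable_equality_set) measurable
  then have "(\<lambda>x. LEAST i. act (enum i) (g x) = f x) \<in> M \<rightarrow>\<^sub>M count_space UNIV"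
    by (rule measurable_Least)
  moreover have "enum \<in> count_space UNIV \<rightarrow>\<^sub>M count_space (carrier H)"
    by simp
  ultimately show ?thesis
    unfolding orbit_witness_def by (rule measurable_compose)
qed

lemma measurable_orbitwise:
  assumes "\<And>x. (x, s x) \<in> orbit_rel H act"
    and "\<And>h. h \<in> carrier H \<Longrightarrow> Measurable.pred borel (\<lambda>x. s x = act h x)"
  shows "s \<in> borel_measurable borel"
proof -
  have s_eq: "s = (\<lambda>x. act (enum (LEAST i. s x = act (enum i) x)) x)"
  proof
    fix x
    obtain i where "s x = act (enum i) x"
      by (rule orbit_rel_enum[OF assms(1)])
    then show "s x = act (enum (LEAST i. s x = act (enum i) x)) x"
      by (rule LeastI)
  qed
  have "(\<lambda>x. LEAST i. s x = act (enum i) x) \<in> borel \<rightarrow>\<^sub>M count_space UNIV"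
    using assms(2)[OF enum_closed] by (rule measurable_Least)
  then have "(\<lambda>x. act (enum (LEAST i. s x = act (enum i) x)) x) \<in> borel_measurable borel"
    by (rule measurable_compose_countable[where f = "\<lambda>i. act (enum i)", rotated]) simp
  then show ?thesis
    by (subst s_eq)
qed

lemma Ball_Image_orbit_enum:
  assumes "F \<subseteq> orbit_rel H act"
  shows "(\<forall>y\<in>F `` {x}. P y) \<longleftrightarrow> (\<forall>i. (x, act (enum i) x) \<in> F \<longrightarrow> P (act (enum i) x))"
proof
  assume "\<forall>i. (x, act (enum i) x) \<in> F \<longrightarrow> P (act (enum i) x)"
  moreover have "\<exists>i. y = act (enum i) x" if "y \<in> F `` {x}" for y
  proof -
    have "(x, y) \<in> orbit_rel H act"
      using that assms by blast
    then obtain i where "y = act (enum i) x"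
      by (rule orbit_rel_enum)
    then show ?thesis ..
  qed
  ultimately show "\<forall>y\<in>F `` {x}. P y"
    by fastforce
qed simp

lemma Borel_class_selector:
  assumes F_sets: "F \<in> sets (borel \<Otimes>\<^sub>M borel)" and "equiv UNIV F"
    and finite_classes: "\<And>x. finite (F `` {x})" and F_orbits: "F \<subseteq> orbit_rel H act"
  obtains s where "s \<in> borel_measurable borel" "class_selector F s"
proof -
  obtain B :: "nat \<Rightarrow> 'x set" where B_open: "\<And>i. open (B i)" and "inj (\<lambda>x i. x \<in> B i)"
    using countable_separating_open_sets by blast
  define \<kappa> where "\<kappa> x = (\<lambda>i. x \<in> B i)" for x
  define s where "s x = less_fun_least \<kappa> (F `` {x})" for x
  have s_iff: "s x = m \<longleftrightarrow> m \<in> F `` {x} \<and> (\<forall>y\<in>F `` {x}. \<not> less_fun (\<kappa> y) (\<kappa> m))" for x m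
  proof -
    have "x \<in> F `` {x}"
      using \<open>equiv UNIV F\<close> by (rule equiv_class_self) simp
    moreover have "inj_on \<kappa> (F `` {x})"
      using \<open>inj (\<lambda>x i. x \<in> B i)\<close> unfolding \<kappa>_def by (rule inj_on_subset) simp
    ultimately show ?thesis
      unfolding s_def using finite_classes by (intro less_fun_least_eq_iff) auto
  qed
  have "class_selector F s"
    unfolding class_selector_def
  proof (intro conjI allI impI)
    show "(x, s x) \<in> F" for x
      using s_iff[of x "s x"] by simp
    show "s x = s y" if "(x, y) \<in> F" for x y
      using equiv_class_eq[OF \<open>equiv UNIV F\<close> that] by (simp add: s_def)
  qed
  moreover have "s \<in> borel_measurable borel"
  proof (rule measurable_orbitwise)
    show "(x, s x) \<in> orbit_rel H act" for x
      using s_iff F_orbits by blast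
  next
    fix h assume h: "h \<in> carrier H"
    have [measurable]: "act h \<in> borel_measurable borel"
      using act_measurable[OF h] .
    have pred_F: "Measurable.pred borel (\<lambda>x. (x, act g x) \<in> F)" if "g \<in> carrier H" for g
      using act_measurable[OF that] by (intro pred_sets2[OF F_sets]) measurable
    have [measurable]: "Measurable.pred borel (\<lambda>x. (x, act h x) \<in> F)"
      "Measurable.pred borel (\<lambda>x. (x, act (enum i) x) \<in> F)" for i
      using pred_F h enum_closed by blast+
    have [measurable]: "Measurable.pred borel (\<lambda>x. less_fun (\<kappa> (act (enum i) x)) (\<kappa> (act h x)))" for i
      unfolding \<kappa>_def by (rule pred_less_fun_membership) (use B_open in simp_all)
    show "Measurable.pred borel (\<lambda>x. s x = act h x)"
      unfolding s_iff Ball_Image_orbit_enum[OF F_orbits] Image_singleton_iff by measurable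
  qed
  ultimately show thesis
    using that by blast
qed

end

subsection \<open>The cocycle of a hyperfinite filtration of the orbit relation\<close>

locale hyperfinite_filtration = countable_Borel_action H act
  for H (structure) and act :: "'g \<Rightarrow> 'x::{second_countable_topology,t2_space} \<Rightarrow> 'x" +
  fixes F :: "nat \<Rightarrow> ('x \<times> 'x) set"
  assumes F_incseq: "incseq F"
    and F_union: "(\<Union>n. F n) = orbit_rel H act"
    and F_sets: "F n \<in> sets (borel \<Otimes>\<^sub>M borel)"
    and F_equiv: "equiv UNIV (F n)"
    and F_finite: "finite (F n `` {x})"
begin

lemma F_mono: "m \<le> n \<Longrightarrow> p \<in> F m \<Longrightarrow> p \<in> F n"
  using F_incseq unfolding incseq_def by blast

lemma F_orbit_rel: "F n \<subseteq> orbit_rel H act"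
  using F_union by blast

lemma orbit_rel_common_level:
  assumes "(x, y) \<in> orbit_rel H act" "(y, z) \<in> orbit_rel H act"
  obtains m where "(x, y) \<in> F m" "(y, z) \<in> F m" "(x, z) \<in> F m"
proof -
  obtain m1 m2 where "(x, y) \<in> F m1" "(y, z) \<in> F m2"
    using assms F_union by blast
  then have "(x, y) \<in> F (max m1 m2)" "(y, z) \<in> F (max m1 m2)"
    by (auto intro: F_mono[OF max.cobounded1] F_mono[OF max.cobounded2])
  moreover from this have "(x, z) \<in> F (max m1 m2)"
    using F_equiv unfolding equiv_def trans_def by blast
  ultimately show thesis
    using that by blast
qed

definition selector :: "nat \<Rightarrow> 'x \<Rightarrow> 'x" where
  "selector n = (SOME s. s \<in> borel_measurable borel \<and> class_selector (F n) s)"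

lemma selector: "selector n \<in> borel_measurable borel" "class_selector (F n) (selector n)"
proof -
  have "\<exists>s. s \<in> borel_measurable borel \<and> class_selector (F n) s"
    using Borel_class_selector[OF F_sets F_equiv F_finite F_orbit_rel] by blast
  then have "selector n \<in> borel_measurable borel \<and> class_selector (F n) (selector n)"
    unfolding selector_def by (rule someI_ex)
  then show "selector n \<in> borel_measurable borel" "class_selector (F n) (selector n)"
    by blast+
qed

primrec rep :: "nat \<Rightarrow> 'x \<Rightarrow> 'x" where
  "rep 0 = (\<lambda>x. x)"
| "rep (Suc n) = selector n"

lemma measurable_rep[measurable]: "rep n \<in> borel_measurable borel"
  by (cases n) (simp_all add: selector(1))

lemma rep_orbit_rel: "(x, rep n x) \<in> orbit_rel H act"
proof (cases n)
  case 0
  then show ?thesis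
    using equiv_orbit_rel by (simp add: equiv_def refl_on_def)
next
  case (Suc m)
  have "(x, selector m x) \<in> F m"
    using selector(2) unfolding class_selector_def by blast
  then show ?thesis
    using Suc F_orbit_rel by auto
qed

lemma rep_eq:
  assumes "(x, y) \<in> F m" "m < n"
  shows "rep n x = rep n y"
proof -
  obtain k where "n = Suc k" "m \<le> k"
    using assms(2) by (cases n) auto
  moreover from this have "(x, y) \<in> F k"
    using F_mono assms(1) by blast
  ultimately show ?thesis
    using selector(2) unfolding class_selector_def by simp
qed

definition step_elem :: "nat \<Rightarrow> 'x \<Rightarrow> 'g" where
  "step_elem n x = orbit_witness (rep n x) (rep (Suc n) x)"

lemma step_elem: "step_elem n x \<in> carrier H" "act (step_elem n x) (rep (Suc n) x) = rep n x"
proof -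
  have "(rep n x, rep (Suc n) x) \<in> orbit_rel H act"
    using rep_orbit_rel[of x n] rep_orbit_rel[of x "Suc n"] equiv_orbit_rel
    unfolding equiv_def sym_def trans_def by blast
  then show "step_elem n x \<in> carrier H" "act (step_elem n x) (rep (Suc n) x) = rep n x"
    unfolding step_elem_def by (rule orbit_witness)+
qed

primrec rep_elem :: "nat \<Rightarrow> 'x \<Rightarrow> 'g" where
  "rep_elem 0 x = \<one>"
| "rep_elem (Suc n) x = rep_elem n x \<otimes> step_elem n x"

lemma rep_elem_closed[simp]: "rep_elem n x \<in> carrier H"
  by (induction n) (simp_all add: step_elem(1))

lemma rep_elem_act: "act (rep_elem n x) (rep n x) = x"
proof (induction n)
  case 0
  then show ?case by simp
next
  case (Suc n)
  then show ?case
    by (simp add: act_mult step_elem del: rep.simps)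
qed

lemma measurable_rep_elem: "rep_elem n \<in> borel \<rightarrow>\<^sub>M count_space (carrier H)"
proof (induction n)
  case 0
  then show ?case by simp
next
  case (Suc n)
  have "step_elem n \<in> borel \<rightarrow>\<^sub>M count_space (carrier H)"
    unfolding step_elem_def[abs_def] by measurable
  then have "(\<lambda>x. rep_elem n x \<otimes> step_elem n x) \<in> borel \<rightarrow>\<^sub>M count_space (carrier H)"
    by (rule measurable_count_space_combine[OF countable_carrier countable_carrier Suc.IH]) simp
  moreover have "rep_elem (Suc n) = (\<lambda>x. rep_elem n x \<otimes> step_elem n x)"
    by (simp add: fun_eq_iff)
  ultimately show ?case
    by simp
qed

definition level_cocycle :: "nat \<Rightarrow> 'x \<Rightarrow> 'x \<Rightarrow> 'g" where
  "level_cocycle n x y = rep_elem n x \<otimes> inv (rep_elem n y)"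

lemma level_cocycle_closed[simp]: "level_cocycle n x y \<in> carrier H"
  by (simp add: level_cocycle_def)

lemma level_cocycle_mult: "level_cocycle n x y \<otimes> level_cocycle n y z = level_cocycle n x z"
  by (simp add: level_cocycle_def m_assoc[symmetric]) (simp add: m_assoc)

lemma level_cocycle_act:
  assumes "(x, y) \<in> F m" "m < n"
  shows "act (level_cocycle n x y) y = x"
proof -
  have "act (level_cocycle n x y) y = act (rep_elem n x) (act (inv (rep_elem n y)) y)"
    by (simp add: level_cocycle_def act_mult)
  also have "\<dots> = act (rep_elem n x) (rep n y)"
    using act_inv_eq[OF rep_elem_closed rep_elem_act] by simp
  also have "\<dots> = x"
    using rep_elem_act[of n x] rep_eq[OF assms] by simp
  finally show ?thesis .
qed

lemma level_cocycle_Suc: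
  assumes "(x, y) \<in> F m" "m < n"
  shows "level_cocycle (Suc n) x y = level_cocycle n x y"
proof -
  have "step_elem n x = step_elem n y"
    unfolding step_elem_def using rep_eq[OF assms] rep_eq[OF assms(1), of "Suc n"] assms(2)
    by (simp del: rep.simps)
  then show ?thesis
    unfolding level_cocycle_def using step_elem(1)[of n y]
    by (simp add: mult_inv_mult_cancel_right)
qed

lemma level_cocycle_stable:
  assumes "(x, y) \<in> F m" "m < n"
  shows "level_cocycle n x y = level_cocycle (Suc m) x y"
  using Suc_leI[OF assms(2)]
proof (induction n rule: dec_induct)
  case (step k)
  then show ?case
    using level_cocycle_Suc[OF assms(1), of k] by simp
qed simp

lemma measurable_level_cocycle:
  "(\<lambda>p. level_cocycle n (fst p) (snd p)) \<in> borel \<Otimes>\<^sub>M borel \<rightarrow>\<^sub>M count_space (carrier H)"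
proof -
  have "(\<lambda>p. rep_elem n (fst p)) \<in> borel \<Otimes>\<^sub>M borel \<rightarrow>\<^sub>M count_space (carrier H)"
    "(\<lambda>p. rep_elem n (snd p)) \<in> borel \<Otimes>\<^sub>M borel \<rightarrow>\<^sub>M count_space (carrier H)"
    by (rule measurable_compose[OF measurable_fst measurable_rep_elem]
        measurable_compose[OF measurable_snd measurable_rep_elem])+
  then show ?thesis
    unfolding level_cocycle_def
    by (rule measurable_count_space_combine[OF countable_carrier countable_carrier]) simp
qed

definition cocycle :: "'x \<times> 'x \<Rightarrow> 'g" where
  "cocycle p = level_cocycle (Suc (LEAST m. p \<in> F m)) (fst p) (snd p)"

lemma cocycle_eq:
  assumes "(x, y) \<in> F m"
  shows "cocycle (x, y) = level_cocycle (Suc m) x y"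
proof -
  define l where "l = (LEAST m. (x, y) \<in> F m)"
  have "(x, y) \<in> F l"
    unfolding l_def using assms by (rule LeastI)
  moreover have "l < Suc m"
    unfolding l_def using assms by (simp add: Least_le le_imp_less_Suc)
  ultimately have "level_cocycle (Suc m) x y = level_cocycle (Suc l) x y"
    by (rule level_cocycle_stable)
  then show ?thesis
    unfolding cocycle_def l_def[symmetric] by simp
qed

lemma measurable_cocycle:
  "cocycle \<in> restrict_space (borel \<Otimes>\<^sub>M borel) (orbit_rel H act) \<rightarrow>\<^sub>M count_space (carrier H)"
proof -
  let ?M = "restrict_space (borel \<Otimes>\<^sub>M borel) (orbit_rel H act)"
  have "Measurable.pred ?M (\<lambda>p. p \<in> F m)" for m
    by (rule pred_sets2[OF F_sets measurable_restrict_space1[OF measurable_ident_sets[OF refl]]])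
  then have "(\<lambda>p. LEAST m. p \<in> F m) \<in> ?M \<rightarrow>\<^sub>M count_space UNIV"
    by (rule measurable_Least)
  then show ?thesis
    unfolding cocycle_def
    by (rule measurable_compose_countable[where f = "\<lambda>m p. level_cocycle (Suc m) (fst p) (snd p)", rotated])
      (intro measurable_restrict_space1 measurable_level_cocycle)
qed

theorem Borel_section:
  "\<exists>\<sigma>. \<sigma> \<in> restrict_space (borel \<Otimes>\<^sub>M borel) (orbit_rel H act) \<rightarrow>\<^sub>M borel \<Otimes>\<^sub>M count_space (carrier H)
     \<and> groupoid_hom_rel_ag H act (orbit_rel H act) \<sigma>
     \<and> (\<forall>p \<in> orbit_rel H act. quot_map H act (\<sigma> p) = p)"
proof (intro exI conjI)
  let ?\<sigma> = "\<lambda>p. (fst p, cocycle p)"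
  show "?\<sigma> \<in> restrict_space (borel \<Otimes>\<^sub>M borel) (orbit_rel H act) \<rightarrow>\<^sub>M borel \<Otimes>\<^sub>M count_space (carrier H)"
    by (intro measurable_Pair measurable_restrict_space1 measurable_fst measurable_cocycle)
  have source: "act (inv (cocycle (x, y))) x = y" if "(x, y) \<in> F m" for x y m
    using act_inv_eq[OF level_cocycle_closed level_cocycle_act[OF that lessI]] that
    by (simp add: cocycle_eq)
  show "groupoid_hom_rel_ag H act (orbit_rel H act) ?\<sigma>"
    unfolding groupoid_hom_rel_ag_def
  proof (intro conjI ballI allI impI)
    fix p
    show "?\<sigma> p \<in> action_groupoid H"
      by (simp add: action_groupoid_def cocycle_def)
  next
    fix x y z assume "(x, y) \<in> orbit_rel H act" "(y, z) \<in> orbit_rel H act"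
    then obtain m where m: "(x, y) \<in> F m" "(y, z) \<in> F m" "(x, z) \<in> F m"
      by (rule orbit_rel_common_level)
    show "ag_source H act (?\<sigma> (x, y)) = ag_range (?\<sigma> (y, z))"
      using source[OF m(1)] by (simp add: ag_source_def ag_range_def)
    show "?\<sigma> (x, z) = ag_mult H (?\<sigma> (x, y)) (?\<sigma> (y, z))"
      using m by (simp add: ag_mult_def cocycle_eq level_cocycle_mult)
  qed
  show "\<forall>p \<in> orbit_rel H act. quot_map H act (?\<sigma> p) = p"
  proof
    fix p assume "p \<in> orbit_rel H act"
    then obtain x y m where "p = (x, y)" "(x, y) \<in> F m"
      using F_union by (metis UN_iff prod.exhaust)
    then show "quot_map H act (?\<sigma> p) = p"
      by (simp add: quot_map_def source)
  qed
qed

end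

theorem lemma5p1:
  fixes H :: "('g, 'm) monoid_scheme" and E :: "'g set"
    and act :: "'g \<Rightarrow> 'x::polish_space \<Rightarrow> 'x"
  assumes "group H"
    and "countable (carrier H)"
    and "E \<lhd> H"
    and "group_action H UNIV act"
    and "\<forall>h \<in> carrier H. act h \<in> borel_measurable borel"
    and "\<forall>e \<in> E. \<forall>x. act e x = x"
    and "hyperfinite (orbit_rel H act)"
  shows "\<exists>\<sigma>. \<sigma> \<in> measurable (restrict_space (borel \<Otimes>\<^sub>M borel) (orbit_rel H act))
                           (borel \<Otimes>\<^sub>M count_space (carrier H))
           \<and> groupoid_hom_rel_ag H act (orbit_rel H act) \<sigma>
           \<and> (\<forall>p \<in> orbit_rel H act. quot_map H act (\<sigma> p) = p)"
proof -
  obtain F :: "nat \<Rightarrow> ('x \<times> 'x) set" where F: "incseq F" "(\<Union>n. F n) = orbit_rel H act"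
    "\<And>n. F n \<in> sets (borel \<Otimes>\<^sub>M borel)" "\<And>n. equiv UNIV (F n)" "\<And>n x. finite (F n `` {x})"
    using assms(7) unfolding hyperfinite_def by (elim exE conjE) (rule that, blast+)
  have "hyperfinite_filtration H act F"
    by (intro hyperfinite_filtration.intro countable_Borel_action.intro hyperfinite_filtration_axioms.intro)
      (use assms(2,4,5) F in auto)
  then show ?thesis
    by (rule hyperfinite_filtration.Borel_section)
qed

end
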